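(* Let $H=\mathbb{C}^n$, let $V\subset H$ be a real linear subspace, and let $\mathcal{F}=\{f_1,\ldots,f_m\}\subset H$ be a frame for $V$. The following statements are equivalent: (1) $\mathcal{F}$ is phase retrievable with respect to $V$; (2) $\ker\mathbb{A}\cap\big(\mathcal{S}^{1,0}(V)-\mathcal{S}^{1,0}(V)\big)=\{0\}$, where $\mathcal{S}^{1,0}(V)-\mathcal{S}^{1,0}(V)=\{xx^*-yy^*:\ x,y\in V\}$; (3) $\ker\mathbb{A}\cap\mathcal{S}^{1,1}(V)=\{0\}$; (4) $\ker\mathbb{A}\cap\big(\mathcal{S}^{2,0}(V)\cup\mathcal{S}^{1,1}(V)\cup\mathcal{S}^{0,2}(V)\big)=\{0\}$; (5) there do not exist vectors $u,v\in V$ with $[\![u,v]\!]\neq 0$ such that $\operatorname{Re}\big(\langle u,f_k\rangle\langle f_k,v\rangle\big)=0$ for all $1\le k\le m$.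
   Context: The inner product on $\mathbb{C}^n$ is $\langle x,y\rangle=\sum_j x_j\overline{y_j}$ (linear in the first argument), and $x^*$ denotes the conjugate transpose. $\mathcal{F}$ is a frame for $V$ if there is $A>0$ with $\sum_{k=1}^m|\langle x,f_k\rangle|^2\ge A\|x\|^2$ for all $x\in V$. Two vectors $x,y\in H$ are equivalent, $x\sim y$, if $x=cy$ for some $c\in\mathbb{C}$ with $|c|=1$. Define $\alpha(x)=(|\langle x,f_k\rangle|)_{k=1}^m\in\mathbb{R}^m$. $\mathcal{F}$ is phase retrievable with respect to $V$ if for all $x,y\in V$, $\alpha(x)=\alpha(y)$ implies $x\sim y$. $\operatorname{Sym}(\mathbb{C}^n)$ is the real vector space of self-adjoint $n\times n$ complex matrices with inner product $\langle T,S\rangle_{HS}=\operatorname{trace}(TS)$. For $u,v\in\mathbb{C}^n$, $[\![u,v]\!]=\frac12(uv^*+vu^* )\in\operatorname{Sym}(\mathbb{C}^n)$. The linear map $\mathbb{A}:\operatorname{Sym}(\mathbb{C}^n)\to\mathbb{R}^m$ is $(\mathbb{A}(T))_k=\langle Tf_k,f_k\rangle=\operatorname{trace}(T f_kf_k^* )$. As subsets of $\operatorname{Sym}(\mathbb{C}^n)$: $\mathcal{S}^{1,0}(V)=\{xx^*: x\in V\}$, $\mathcal{S}^{1,1}(V)=\{[\![u,v]\!]: u,v\in V\}$, $\mathcal{S}^{2,0}(V)=\{uu^*+vv^*: u,v\in V\}$, $\mathcal{S}^{0,2}(V)=\{-uu^*-vv^*: u,v\in V\}$. *)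

theory Defs
  imports "HOL-Analysis.Analysis"
begin

text \<open>A real linear subspace V is HOL-Analysis subspace (real scalars, since complex^'n is a
  real vector space).\<close>

definition cinner :: "complex ^ 'n \<Rightarrow> complex ^ 'n \<Rightarrow> complex" where
  "cinner x y = (\<Sum>j\<in>UNIV. x $ j * cnj (y $ j))"

definition is_frame :: "(complex ^ 'n) set \<Rightarrow> (nat \<Rightarrow> complex ^ 'n) \<Rightarrow> nat \<Rightarrow> bool" where
  "is_frame V f m \<longleftrightarrow>
     (\<exists>A>0. \<forall>x\<in>V. (\<Sum>k=1..m. (cmod (cinner x (f k)))\<^sup>2) \<ge> A * (norm x)\<^sup>2)"

definition equiv_vec :: "complex ^ 'n \<Rightarrow> complex ^ 'n \<Rightarrow> bool" where
  "equiv_vec x y \<longleftrightarrow> (\<exists>c. cmod c = 1 \<and> x = c *s y)"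

definition phase_retrievable :: "(complex ^ 'n) set \<Rightarrow> (nat \<Rightarrow> complex ^ 'n) \<Rightarrow> nat \<Rightarrow> bool" where
  "phase_retrievable V f m \<longleftrightarrow>
     (\<forall>x\<in>V. \<forall>y\<in>V. (\<forall>k\<in>{1..m}. cmod (cinner x (f k)) = cmod (cinner y (f k))) \<longrightarrow> equiv_vec x y)"

definition self_adjoint :: "complex ^ 'n ^ 'n \<Rightarrow> bool" where
  "self_adjoint T \<longleftrightarrow> (\<forall>i j. T $ i $ j = cnj (T $ j $ i))"

definition Sym :: "(complex ^ 'n ^ 'n) set" where
  "Sym = {T. self_adjoint T}"

definition outer :: "complex ^ 'n \<Rightarrow> complex ^ 'n \<Rightarrow> complex ^ 'n ^ 'n" where
  "outer u v = (\<chi> i j. u $ i * cnj (v $ j))"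

definition sbr :: "complex ^ 'n \<Rightarrow> complex ^ 'n \<Rightarrow> complex ^ 'n ^ 'n" where
  "sbr u v = (1/2 :: real) *\<^sub>R (outer u v + outer v u)"

text \<open>(A T)_k = <T f_k, f_k>, a real number for self-adjoint T\<close>
definition opA :: "(nat \<Rightarrow> complex ^ 'n) \<Rightarrow> complex ^ 'n ^ 'n \<Rightarrow> nat \<Rightarrow> real" where
  "opA f T k = Re (cinner (T *v f k) (f k))"

definition kerA :: "(nat \<Rightarrow> complex ^ 'n) \<Rightarrow> nat \<Rightarrow> (complex ^ 'n ^ 'n) set" where
  "kerA f m = {T \<in> Sym. \<forall>k\<in>{1..m}. opA f T k = 0}"

definition S10 :: "(complex ^ 'n) set \<Rightarrow> (complex ^ 'n ^ 'n) set" where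
  "S10 V = {outer x x | x. x \<in> V}"

definition S11 :: "(complex ^ 'n) set \<Rightarrow> (complex ^ 'n ^ 'n) set" where
  "S11 V = {sbr u v | u v. u \<in> V \<and> v \<in> V}"

definition S20 :: "(complex ^ 'n) set \<Rightarrow> (complex ^ 'n ^ 'n) set" where
  "S20 V = {outer u u + outer v v | u v. u \<in> V \<and> v \<in> V}"

definition S02 :: "(complex ^ 'n) set \<Rightarrow> (complex ^ 'n ^ 'n) set" where
  "S02 V = {- outer u u - outer v v | u v. u \<in> V \<and> v \<in> V}"

definition S10_diff :: "(complex ^ 'n) set \<Rightarrow> (complex ^ 'n ^ 'n) set" where
  "S10_diff V = {X - Y | X Y. X \<in> S10 V \<and> Y \<in> S10 V}"

end

theory Submission
  imports Defs
begin

text \<open>Since \<open>\<langle>(xx\<^sup>* - yy\<^sup>*) f, f\<rangle> = |\<langle>x,f\<rangle>|\<^sup>2 - |\<langle>y,f\<rangle>|\<^sup>2\<close> and \<open>xx\<^sup>* = yy\<^sup>*\<close> exactly when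
  \<open>x \<sim> y\<close>, phase retrievability says that \<open>ker \<A>\<close> meets \<open>S\<^sup>1\<^sup>,\<^sup>0(V) - S\<^sup>1\<^sup>,\<^sup>0(V)\<close>
  only in \<open>0\<close>. Polarisation \<open>xx\<^sup>* - yy\<^sup>* = [[x+y, x-y]]\<close> identifies this difference set
  with \<open>S\<^sup>1\<^sup>,\<^sup>1(V)\<close>, and \<open>\<A>([[u,v]])\<^sub>k = Re(\<langle>u,f\<^sub>k\<rangle>\<langle>f\<^sub>k,v\<rangle>)\<close> gives (5). Finally
  \<open>\<A>(uu\<^sup>* + vv\<^sup>*)\<^sub>k = |\<langle>u,f\<^sub>k\<rangle>|\<^sup>2 + |\<langle>v,f\<^sub>k\<rangle>|\<^sup>2\<close>, which by the lower frame bound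
  vanishes for all \<open>k\<close> only if \<open>u = v = 0\<close>; so \<open>S\<^sup>2\<^sup>,\<^sup>0(V)\<close> and \<open>S\<^sup>0\<^sup>,\<^sup>2(V)\<close> add nothing
  to the kernel.\<close>

lemma cinner_add_left: "cinner (a + b) z = cinner a z + cinner b z"
  unfolding cinner_def by (simp add: algebra_simps sum.distrib)

lemma cinner_diff_left: "cinner (a - b) z = cinner a z - cinner b z"
  unfolding cinner_def by (simp add: algebra_simps sum_subtractf)

lemma cinner_minus_left: "cinner (- a) z = - cinner a z"
  unfolding cinner_def by (simp add: sum_negf)

lemma cinner_scaleR_left: "cinner (r *\<^sub>R a) z = of_real r * cinner a z"
  unfolding cinner_def by (simp add: scaleR_conv_of_real[where 'a = complex] sum_distrib_left mult_ac)

lemma cinner_commute: "cinner w x = cnj (cinner x w)"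
  unfolding cinner_def by (simp add: mult.commute)

lemma cinner_outer_mult: "cinner (outer u v *v w) z = cinner u z * cinner w v"
  unfolding cinner_def outer_def matrix_vector_mult_def
  by (simp add: sum_product sum_distrib_left sum_distrib_right mult_ac) (rule sum.swap)

lemma matrix_vector_mult_uminus: "(- A) *v x = - (A *v (x :: complex ^ 'n))"
  unfolding matrix_vector_mult_def by (simp add: vec_eq_iff sum_negf)

lemma matrix_vector_mult_scaleR_left: "(r *\<^sub>R A) *v x = r *\<^sub>R (A *v (x :: complex ^ 'n))"
  unfolding matrix_vector_mult_def by (simp add: vec_eq_iff scaleR_sum_right)

lemma opA_add: "opA f (A + B) k = opA f A k + opA f B k"
  unfolding opA_def by (simp add: matrix_vector_mult_add_rdistrib cinner_add_left)

lemma opA_diff: "opA f (A - B) k = opA f A k - opA f B k"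
  unfolding opA_def by (simp add: matrix_vector_mult_diff_rdistrib cinner_diff_left)

lemma opA_uminus: "opA f (- A) k = - opA f A k"
  unfolding opA_def by (simp add: matrix_vector_mult_uminus cinner_minus_left)

lemma opA_outer: "opA f (outer x x) k = (cmod (cinner x (f k)))\<^sup>2"
proof -
  have "cinner x (f k) * cinner (f k) x = of_real ((cmod (cinner x (f k)))\<^sup>2)"
    by (subst cinner_commute[of "f k" x]) (rule complex_norm_square[symmetric])
  then show ?thesis
    unfolding opA_def cinner_outer_mult by simp
qed

lemma opA_sbr: "opA f (sbr u v) k = Re (cinner u (f k) * cinner (f k) v)"
proof -
  have "cinner v (f k) * cinner (f k) u = cnj (cinner u (f k) * cinner (f k) v)"
    by (simp only: cinner_commute[of v "f k"] cinner_commute[of "f k" u] complex_cnj_mult mult.commute)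
  then show ?thesis
    unfolding opA_def sbr_def matrix_vector_mult_scaleR_left cinner_scaleR_left
      matrix_vector_mult_add_rdistrib cinner_add_left cinner_outer_mult
    by simp
qed

lemma sbr_nth: "sbr u v $ i $ j = (u $ i * cnj (v $ j) + v $ i * cnj (u $ j)) / 2"
  unfolding sbr_def outer_def by (simp add: scaleR_conv_of_real[where 'a = complex])

lemma outer_diff_eq_sbr: "outer x x - outer y y = sbr (x + y) (x - y)"
  by (simp add: vec_eq_iff sbr_nth outer_def field_simps)

lemma sbr_eq_outer_diff:
  fixes u v :: "complex ^ 'n"
  defines "x \<equiv> (1/2 :: real) *\<^sub>R (u + v)" and "y \<equiv> (1/2 :: real) *\<^sub>R (u - v)"
  shows "sbr u v = outer x x - outer y y"
proof -
  have "x + y = (1/2 :: real) *\<^sub>R (u + u)"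
    unfolding x_def y_def by (simp only: scaleR_add_right[symmetric]) (simp add: algebra_simps)
  moreover have "x - y = (1/2 :: real) *\<^sub>R (v + v)"
    unfolding x_def y_def by (simp only: scaleR_diff_right[symmetric]) (simp add: algebra_simps)
  ultimately have "x + y = u" "x - y = v"
    by simp_all
  then show ?thesis
    by (simp add: outer_diff_eq_sbr)
qed

lemma outer_self_eq_iff_equiv_vec: "outer x x = outer y y \<longleftrightarrow> equiv_vec x y"
proof
  assume "equiv_vec x y"
  then obtain c where c: "cmod c = 1" "x = c *s y"
    unfolding equiv_vec_def by blast
  then have "c * cnj c = 1"
    using complex_norm_square[of c] by simp
  moreover have "c * y $ i * cnj (c * y $ j) = (c * cnj c) * (y $ i * cnj (y $ j))" for i j
    by (simp add: mult_ac)
  ultimately show "outer x x = outer y y"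
    unfolding c(2) outer_def vec_eq_iff vector_scalar_mult_def by simp
next
  assume outer_eq: "outer x x = outer y y"
  have xy: "x $ i * cnj (x $ j) = y $ i * cnj (y $ j)" for i j
  proof -
    have "outer x x $ i $ j = outer y y $ i $ j"
      using outer_eq by simp
    then show ?thesis
      by (simp add: outer_def)
  qed
  show "equiv_vec x y"
  proof (cases "y = 0")
    case True
    then have "x $ i * cnj (x $ i) = 0" for i
      using xy[of i i] by simp
    then have "x = 0"
      by (simp add: vec_eq_iff)
    with True show ?thesis
      unfolding equiv_vec_def by (intro exI[of _ 1]) simp
  next
    case False
    then obtain j where yj: "y $ j \<noteq> 0"
      by (auto simp: vec_eq_iff)
    have "complex_of_real ((cmod (x $ j))\<^sup>2) = of_real ((cmod (y $ j))\<^sup>2)"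
      by (simp only: complex_norm_square xy)
    then have norm_eq: "cmod (x $ j) = cmod (y $ j)"
      by (simp only: of_real_eq_iff power2_eq_iff_nonneg norm_ge_zero)
    with yj have xj: "cnj (x $ j) \<noteq> 0"
      by auto
    define c where "c = cnj (y $ j) / cnj (x $ j)"
    have "cmod c = 1"
      using norm_eq yj unfolding c_def by (simp add: norm_divide)
    moreover have "x = c *s y"
      unfolding vec_eq_iff
    proof
      fix i
      have "x $ i = x $ i * cnj (x $ j) / cnj (x $ j)"
        using xj by simp
      also have "\<dots> = c * y $ i"
        unfolding xy c_def by simp
      finally show "x $ i = (c *s y) $ i"
        by simp
    qed
    ultimately show ?thesis
      unfolding equiv_vec_def by blast
  qed
qed

lemma outer_zero: "outer 0 0 = (0 :: complex ^ 'n ^ 'n)"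
  by (simp add: outer_def vec_eq_iff)

lemma outer_diff_in_Sym: "outer x x - outer y y \<in> Sym"
  unfolding Sym_def self_adjoint_def outer_def by simp

lemma sbr_in_Sym: "sbr u v \<in> Sym"
  unfolding Sym_def self_adjoint_def by (simp add: sbr_nth algebra_simps)

lemma zero_in_kerA: "0 \<in> kerA f m"
  unfolding kerA_def Sym_def self_adjoint_def opA_def cinner_def by simp

lemma outer_diff_in_kerA_iff:
  "outer x x - outer y y \<in> kerA f m \<longleftrightarrow>
     (\<forall>k\<in>{1..m}. cmod (cinner x (f k)) = cmod (cinner y (f k)))"
  unfolding kerA_def using outer_diff_in_Sym[of x y]
  by (simp add: opA_diff opA_outer power2_eq_iff_nonneg)

lemma sbr_in_kerA_iff:
  "sbr u v \<in> kerA f m \<longleftrightarrow> (\<forall>k\<in>{1..m}. Re (cinner u (f k) * cinner (f k) v) = 0)"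
  unfolding kerA_def using sbr_in_Sym[of u v] by (simp add: opA_sbr)

lemma is_frame_cinner_eq_0:
  assumes "is_frame V f m" "u \<in> V" "\<forall>k\<in>{1..m}. cinner u (f k) = 0"
  shows "u = 0"
proof -
  obtain A where "A > 0" "A * (norm u)\<^sup>2 \<le> (\<Sum>k=1..m. (cmod (cinner u (f k)))\<^sup>2)"
    using assms(1,2) unfolding is_frame_def by blast
  with assms(3) show ?thesis
    by (simp add: mult_le_0_iff)
qed

lemma is_frame_outer_add_in_kerA:
  assumes "is_frame V f m" "u \<in> V" "v \<in> V"
    and "\<forall>k\<in>{1..m}. opA f (outer u u + outer v v) k = 0"
  shows "u = 0 \<and> v = 0"
proof -
  have "\<forall>k\<in>{1..m}. (cmod (cinner u (f k)))\<^sup>2 + (cmod (cinner v (f k)))\<^sup>2 = 0"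
    using assms(4) by (simp add: opA_add opA_outer)
  then have "\<forall>k\<in>{1..m}. cinner u (f k) = 0 \<and> cinner v (f k) = 0"
    by (simp add: add_nonneg_eq_0_iff)
  then show ?thesis
    using is_frame_cinner_eq_0[OF assms(1)] assms(2,3) by blast
qed

lemma kerA_inter_S20_subset:
  assumes "is_frame V f m"
  shows "kerA f m \<inter> S20 V \<subseteq> {0}"
proof
  fix T assume "T \<in> kerA f m \<inter> S20 V"
  then obtain u v where uv: "u \<in> V" "v \<in> V" "T = outer u u + outer v v"
    and "\<forall>k\<in>{1..m}. opA f (outer u u + outer v v) k = 0"
    unfolding S20_def kerA_def by blast
  then have "u = 0" "v = 0"
    using is_frame_outer_add_in_kerA[OF assms] by blast+
  then show "T \<in> {0}"
    unfolding uv(3) by (simp add: outer_zero)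
qed

lemma kerA_inter_S02_subset:
  assumes "is_frame V f m"
  shows "kerA f m \<inter> S02 V \<subseteq> {0}"
proof
  fix T assume "T \<in> kerA f m \<inter> S02 V"
  then obtain u v where uv: "u \<in> V" "v \<in> V" "T = - outer u u - outer v v"
    and T_ker: "\<forall>k\<in>{1..m}. opA f T k = 0"
    unfolding S02_def kerA_def by blast
  have "opA f T k = - opA f (outer u u + outer v v) k" for k
    unfolding uv(3) by (simp add: opA_add opA_diff opA_uminus)
  with T_ker have "\<forall>k\<in>{1..m}. opA f (outer u u + outer v v) k = 0"
    by simp
  then have "u = 0" "v = 0"
    using is_frame_outer_add_in_kerA[OF assms] uv(1,2) by blast+
  then show "T \<in> {0}"
    unfolding uv(3) by (simp add: outer_zero)
qed

lemma phase_retrievable_iff_kerA_S10_diff: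
  assumes "subspace V"
  shows "phase_retrievable V f m \<longleftrightarrow> kerA f m \<inter> S10_diff V = {0}"
proof -
  have "0 \<in> S10_diff V"
    using subspace_0[OF assms] unfolding S10_diff_def S10_def by force
  then have "kerA f m \<inter> S10_diff V = {0} \<longleftrightarrow>
      (\<forall>x\<in>V. \<forall>y\<in>V. outer x x - outer y y \<in> kerA f m \<longrightarrow> outer x x - outer y y = 0)"
    using zero_in_kerA[of f m] unfolding S10_diff_def S10_def by blast
  then show ?thesis
    unfolding phase_retrievable_def outer_diff_in_kerA_iff
    by (simp add: outer_self_eq_iff_equiv_vec)
qed

lemma S10_diff_eq_S11:
  assumes "subspace V"
  shows "S10_diff V = S11 V"
proof
  show "S10_diff V \<subseteq> S11 V"
    using subspace_add[OF assms] subspace_diff[OF assms]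
    unfolding S10_diff_def S10_def S11_def by (force simp: outer_diff_eq_sbr)
  show "S11 V \<subseteq> S10_diff V"
  proof
    fix T assume "T \<in> S11 V"
    then obtain u v where "u \<in> V" "v \<in> V" "T = sbr u v"
      unfolding S11_def by blast
    with assms show "T \<in> S10_diff V"
      unfolding S10_diff_def S10_def sbr_eq_outer_diff
      by (blast intro: subspace_scale subspace_add subspace_diff)
  qed
qed

lemma zero_in_S11:
  assumes "subspace V"
  shows "0 \<in> S11 V"
proof -
  have "sbr 0 0 = (0 :: complex ^ 'n ^ 'n)"
    by (simp add: vec_eq_iff sbr_nth)
  then show ?thesis
    using subspace_0[OF assms] unfolding S11_def by force
qed

lemma kerA_inter_S11_eq_zero_iff:
  assumes "subspace V"
  shows "kerA f m \<inter> S11 V = {0} \<longleftrightarrow>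
    \<not> (\<exists>u\<in>V. \<exists>v\<in>V. sbr u v \<noteq> 0 \<and> (\<forall>k\<in>{1..m}. Re (cinner u (f k) * cinner (f k) v) = 0))"
  using zero_in_S11[OF assms] zero_in_kerA[of f m]
  unfolding sbr_in_kerA_iff[symmetric] S11_def by blast

lemma kerA_inter_S20_S11_S02:
  assumes "subspace V" "is_frame V f m"
  shows "kerA f m \<inter> (S20 V \<union> S11 V \<union> S02 V) = kerA f m \<inter> S11 V"
  using kerA_inter_S20_subset[OF assms(2)] kerA_inter_S02_subset[OF assms(2)]
    zero_in_S11[OF assms(1)] zero_in_kerA[of f m]
  by blast

theorem theorem3p1:
  fixes V :: "(complex ^ 'n) set" and f :: "nat \<Rightarrow> complex ^ 'n" and m :: nat
  assumes "subspace V"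
    and "is_frame V f m"
  shows "(phase_retrievable V f m \<longleftrightarrow> kerA f m \<inter> S10_diff V = {0})
       \<and> (phase_retrievable V f m \<longleftrightarrow> kerA f m \<inter> S11 V = {0})
       \<and> (phase_retrievable V f m \<longleftrightarrow> kerA f m \<inter> (S20 V \<union> S11 V \<union> S02 V) = {0})
       \<and> (phase_retrievable V f m \<longleftrightarrow>
            \<not> (\<exists>u\<in>V. \<exists>v\<in>V. sbr u v \<noteq> 0 \<and>
                  (\<forall>k\<in>{1..m}. Re (cinner u (f k) * cinner (f k) v) = 0)))"
  using phase_retrievable_iff_kerA_S10_diff[OF assms(1)] S10_diff_eq_S11[OF assms(1)]
    kerA_inter_S20_S11_S02[OF assms] kerA_inter_S11_eq_zero_iff[OF assms(1)]
  by simp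

end
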